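(* For every parsummable category $\mathcal C$ (and the fixed injection $\phi\colon\omega\times\omega\to\omega$), the functor $S_{\mathcal C}\colon\Theta(\mathcal C)\to\mathcal C$ is an equivalence of categories. For varying $\mathcal C$, these functors form a natural transformation $\mathrm{forget}\circ\Theta\Rightarrow\mathrm{forget}$ of functors $\mathbf{ParSumCat}\to\mathbf{Cat}$, i.e. $S_{\mathcal D}\circ\Theta(F)=F\circ S_{\mathcal C}$ for every morphism $F\colon\mathcal C\to\mathcal D$ of parsummable categories.
   Context: Let $\omega=\{1,2,\dots\}$, $\mathbf m=\{1,\dots,m\}$, $\mathcal M$ the monoid of injections $\omega\to\omega$. A parsummable category is a small $E\mathcal M$-category (strict action of the chaotic category on $\mathcal M$; $u_*$ the action, $[v,u]\colon u_*\Rightarrow v_*$) all of whose objects have finite support (intersection of finite $A\subset\omega$ with $u_*X=X$ for all $u$ fixing $A$ pointwise), with an object $0$ of empty support and a strictly unital, associative, commutative, equivariant sum on disjointly supported pairs; morphisms ($\mathbf{ParSumCat}$) are equivariant functors preserving $0,+$; $\mathrm{forget}$ is the forgetful functor to $\mathbf{Cat}$. For a finite set $A$, injections $\phi,\phi'\colon A\times\omega\to\omega$ and $X_\bullet=(X_a)_{a\in A}$: $\phi_*(X_\bullet)=\sum_a\phi(a,-)_*(X_a)$, $[\phi',\phi]_{X_\bullet}=\sum_a[\phi'(a,-),\phi(a,-)]_{X_a}$. $\Sigma(\mathcal C)$ is the permutative category with objects finite sequences of objects of $\mathcal C$ (unit the empty sequence $\epsilon$), morphisms $(X_1,\dots,X_m)\to(Y_1,\dots,Y_n)$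 classes $[\psi,f,\phi]$ (injections $\phi\colon\mathbf m\times\omega\to\omega$, $\psi\colon\mathbf n\times\omega\to\omega$, $f\colon\phi_*(X_\bullet)\to\psi_*(Y_\bullet)$) modulo $(\psi,f,\phi)\sim(\psi',[\psi',\psi]f[\phi,\phi'],\phi')$, composition $[\rho,g,\theta][\psi,f,\phi]=[\rho,g[\theta,\psi]f,\phi]$, tensor product concatenation and $[\psi,f,\phi]\otimes[\rho,g,\theta]=[\psi+\rho,f+g,\phi+\theta]$ for disjoint-image representatives, symmetry $[\bar\phi,\mathrm{id},\phi]$; $\Sigma(F)$ applies $F$ entrywise and sends $[\psi,f,\phi]$ to $[\psi,Ff,\phi]$. For a small permutative category $\mathscr P$, $\Phi(\mathscr P)$ is the parsummable category of sequences $(P_1,P_2,\dots)$ with almost all $P_i=\mathbf 1$, morphisms $P\to Q$ being morphisms $\bigotimes_iP_i\to\bigotimes_iQ_i$ in $\mathscr P$; $\Phi(F)$ applies $F$ entrywise and on morphisms. $\Theta(\mathcal C)$ is the full parsummable subcategory of $\Phi\Sigma(\mathcal C)$ on sequences each of whose entries is $\epsilon$ or a $1$-tuple; $\Theta$ is a subfunctor of $\Phi\Sigma$. For finite $A\subset\omega$ and $X_\bullet=(X_a)_{a\in A}$, $\langle A,X_\bullet\rangle$ has $i$-th entry $(X_i)$ for $i\in A$ and $\epsilon$ otherwise; every object of $\Theta(\mathcal C)$ is uniquely of this form. With $\kappa_A\colon\{1,\dots,|A|\}\to A$ the order-preserving bijection and $\kappa_A^*X_\bullet=(X_{\kappa_A(1)},\dots,X_{\kappa_A(|A|)})$,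 a morphism $\langle A,X_\bullet\rangle\to\langle B,Y_\bullet\rangle$ in $\Theta(\mathcal C)$ is a morphism $\kappa_A^*X_\bullet\to\kappa_B^*Y_\bullet$ in $\Sigma(\mathcal C)$. Fix an injection $\phi\colon\omega\times\omega\to\omega$. $S_{\mathcal C}\langle A,X_\bullet\rangle=(\phi|_A)_*(X_\bullet)$ ($\phi|_A$ the restriction to $A\times\omega$); a morphism $\alpha$ has a unique representative $(\phi|_B\circ(\kappa_B\times\mathrm{id}),f,\phi|_A\circ(\kappa_A\times\mathrm{id}))$ and $S_{\mathcal C}(\alpha)=f$; this is a well-defined functor $\Theta(\mathcal C)\to\mathcal C$. *)

theory Defs
  imports Main "HOL-Library.Nat_Bijection"
begin

record ('o, 'm) cat =
  c_obj  :: "'o set"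
  c_arr  :: "'m set"
  c_dom  :: "'m \<Rightarrow> 'o"
  c_cod  :: "'m \<Rightarrow> 'o"
  c_id   :: "'o \<Rightarrow> 'm"
  c_comp :: "'m \<Rightarrow> 'm \<Rightarrow> 'm"   (* c_comp C g f = g \<circ> f *)

definition hom :: "('o, 'm, 'x) cat_scheme \<Rightarrow> 'o \<Rightarrow> 'o \<Rightarrow> 'm set" where
  "hom C X Y = {f \<in> c_arr C. c_dom C f = X \<and> c_cod C f = Y}"

definition is_cat :: "('o, 'm, 'x) cat_scheme \<Rightarrow> bool" where
  "is_cat C \<longleftrightarrow>
     (\<forall>f\<in>c_arr C. c_dom C f \<in> c_obj C \<and> c_cod C f \<in> c_obj C) \<and>
     (\<forall>X\<in>c_obj C. c_id C X \<in> hom C X X) \<and>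
     (\<forall>f\<in>c_arr C. \<forall>g\<in>c_arr C. c_cod C f = c_dom C g \<longrightarrow>
         c_comp C g f \<in> hom C (c_dom C f) (c_cod C g)) \<and>
     (\<forall>f\<in>c_arr C. c_comp C f (c_id C (c_dom C f)) = f \<and> c_comp C (c_id C (c_cod C f)) f = f) \<and>
     (\<forall>f\<in>c_arr C. \<forall>g\<in>c_arr C. \<forall>h\<in>c_arr C. c_cod C f = c_dom C g \<and> c_cod C g = c_dom C h \<longrightarrow>
         c_comp C h (c_comp C g f) = c_comp C (c_comp C h g) f)"

definition is_functor ::
  "('o, 'm, 'x) cat_scheme \<Rightarrow> ('p, 'n, 'y) cat_scheme \<Rightarrow> ('o \<Rightarrow> 'p) \<Rightarrow> ('m \<Rightarrow> 'n) \<Rightarrow> bool" where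
  "is_functor A B Fo Fm \<longleftrightarrow> is_cat A \<and> is_cat B \<and>
     (\<forall>X\<in>c_obj A. Fo X \<in> c_obj B) \<and>
     (\<forall>f\<in>c_arr A. Fm f \<in> hom B (Fo (c_dom A f)) (Fo (c_cod A f))) \<and>
     (\<forall>X\<in>c_obj A. Fm (c_id A X) = c_id B (Fo X)) \<and>
     (\<forall>f\<in>c_arr A. \<forall>g\<in>c_arr A. c_cod A f = c_dom A g \<longrightarrow>
         Fm (c_comp A g f) = c_comp B (Fm g) (Fm f))"

definition is_iso :: "('o, 'm, 'x) cat_scheme \<Rightarrow> 'm \<Rightarrow> bool" where
  "is_iso C f \<longleftrightarrow> f \<in> c_arr C \<and> (\<exists>g\<in>hom C (c_cod C f) (c_dom C f).
      c_comp C g f = c_id C (c_dom C f) \<and> c_comp C f g = c_id C (c_cod C f))"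

definition nat_iso ::
  "('o, 'm, 'x) cat_scheme \<Rightarrow> ('p, 'n, 'y) cat_scheme \<Rightarrow> ('o \<Rightarrow> 'p) \<Rightarrow> ('m \<Rightarrow> 'n)
    \<Rightarrow> ('o \<Rightarrow> 'p) \<Rightarrow> ('m \<Rightarrow> 'n) \<Rightarrow> ('o \<Rightarrow> 'n) \<Rightarrow> bool" where
  "nat_iso A B Fo Fm Go Gm eta \<longleftrightarrow>
     (\<forall>X\<in>c_obj A. eta X \<in> hom B (Fo X) (Go X) \<and> is_iso B (eta X)) \<and>
     (\<forall>f\<in>c_arr A. c_comp B (Gm f) (eta (c_dom A f)) = c_comp B (eta (c_cod A f)) (Fm f))"

definition cat_equivalence ::
  "('o, 'm, 'x) cat_scheme \<Rightarrow> ('p, 'n, 'y) cat_scheme \<Rightarrow> ('o \<Rightarrow> 'p) \<Rightarrow> ('m \<Rightarrow> 'n) \<Rightarrow> bool" where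
  "cat_equivalence A B Fo Fm \<longleftrightarrow> is_functor A B Fo Fm \<and>
     (\<exists>Go Gm eta eps. is_functor B A Go Gm \<and>
        nat_iso A A (\<lambda>X. X) (\<lambda>f. f) (Go \<circ> Fo) (Gm \<circ> Fm) eta \<and>
        nat_iso B B (Fo \<circ> Go) (Fm \<circ> Gm) (\<lambda>X. X) (\<lambda>f. f) eps)"

text \<open>omega is modelled by the type nat (0-based); the injection monoid M is
  the set of injective functions nat \<Rightarrow> nat.
  act_m C v u f is the image of the morphism ([v,u], f) of EM \<times> C under the action
  functor EM \<times> C \<rightarrow> C; so u_* f = act_m C u u f and [v,u]_X = act_m C v u (id X).\<close>

record ('o, 'm) parsum = "('o, 'm) cat" +
  act_o  :: "(nat \<Rightarrow> nat) \<Rightarrow> 'o \<Rightarrow> 'o"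
  act_m  :: "(nat \<Rightarrow> nat) \<Rightarrow> (nat \<Rightarrow> nat) \<Rightarrow> 'm \<Rightarrow> 'm"
  zero   :: "'o"
  plus_o :: "'o \<Rightarrow> 'o \<Rightarrow> 'o"
  plus_m :: "'m \<Rightarrow> 'm \<Rightarrow> 'm"

definition em_cat :: "('o, 'm, 'x) parsum_scheme \<Rightarrow> bool" where
  "em_cat C \<longleftrightarrow> is_cat C \<and>
     (\<forall>u X. inj u \<and> X \<in> c_obj C \<longrightarrow> act_o C u X \<in> c_obj C) \<and>
     (\<forall>u v f. inj u \<and> inj v \<and> f \<in> c_arr C \<longrightarrow>
        act_m C v u f \<in> hom C (act_o C u (c_dom C f)) (act_o C v (c_cod C f))) \<and>
     (\<forall>u X. inj u \<and> X \<in> c_obj C \<longrightarrow> act_m C u u (c_id C X) = c_id C (act_o C u X)) \<and>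
     (\<forall>u v w f g. inj u \<and> inj v \<and> inj w \<and> f \<in> c_arr C \<and> g \<in> c_arr C \<and> c_cod C f = c_dom C g \<longrightarrow>
        c_comp C (act_m C w v g) (act_m C v u f) = act_m C w u (c_comp C g f)) \<and>
     (\<forall>X\<in>c_obj C. act_o C id X = X) \<and>
     (\<forall>f\<in>c_arr C. act_m C id id f = f) \<and>
     (\<forall>u v X. inj u \<and> inj v \<and> X \<in> c_obj C \<longrightarrow> act_o C u (act_o C v X) = act_o C (u \<circ> v) X) \<and>
     (\<forall>u v u' v' f. inj u \<and> inj v \<and> inj u' \<and> inj v' \<and> f \<in> c_arr C \<longrightarrow>
        act_m C v u (act_m C v' u' f) = act_m C (v \<circ> v') (u \<circ> u') f)"

definition supports :: "('o, 'm, 'x) parsum_scheme \<Rightarrow> 'o \<Rightarrow> nat set \<Rightarrow> bool" where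
  "supports C X A \<longleftrightarrow> (\<forall>u. inj u \<and> (\<forall>a\<in>A. u a = a) \<longrightarrow> act_o C u X = X)"

definition supp :: "('o, 'm, 'x) parsum_scheme \<Rightarrow> 'o \<Rightarrow> nat set" where
  "supp C X = \<Inter> {A. finite A \<and> supports C X A}"

definition disj :: "('o, 'm, 'x) parsum_scheme \<Rightarrow> 'o \<Rightarrow> 'o \<Rightarrow> bool" where
  "disj C X Y \<longleftrightarrow> supp C X \<inter> supp C Y = {}"

definition disj_m :: "('o, 'm, 'x) parsum_scheme \<Rightarrow> 'm \<Rightarrow> 'm \<Rightarrow> bool" where
  "disj_m C f g \<longleftrightarrow> f \<in> c_arr C \<and> g \<in> c_arr C \<and>
     disj C (c_dom C f) (c_dom C g) \<and> disj C (c_cod C f) (c_cod C g)"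

definition parsummable :: "('o, 'm, 'x) parsum_scheme \<Rightarrow> bool" where
  "parsummable C \<longleftrightarrow> em_cat C \<and>
     (\<forall>X\<in>c_obj C. \<exists>A. finite A \<and> supports C X A) \<and>
     zero C \<in> c_obj C \<and> supp C (zero C) = {} \<and>
     (\<forall>X\<in>c_obj C. \<forall>Y\<in>c_obj C. disj C X Y \<longrightarrow> plus_o C X Y \<in> c_obj C) \<and>
     (\<forall>f g. disj_m C f g \<longrightarrow>
        plus_m C f g \<in> hom C (plus_o C (c_dom C f) (c_dom C g)) (plus_o C (c_cod C f) (c_cod C g))) \<and>
     (\<forall>X\<in>c_obj C. \<forall>Y\<in>c_obj C. disj C X Y \<longrightarrow>
        plus_m C (c_id C X) (c_id C Y) = c_id C (plus_o C X Y)) \<and>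
     (\<forall>f g f' g'. disj_m C f g \<and> disj_m C f' g' \<and> c_cod C f = c_dom C f' \<and> c_cod C g = c_dom C g' \<longrightarrow>
        plus_m C (c_comp C f' f) (c_comp C g' g) = c_comp C (plus_m C f' g') (plus_m C f g)) \<and>
     (\<forall>X\<in>c_obj C. plus_o C (zero C) X = X) \<and>
     (\<forall>f\<in>c_arr C. plus_m C (c_id C (zero C)) f = f) \<and>
     (\<forall>X\<in>c_obj C. \<forall>Y\<in>c_obj C. \<forall>Z\<in>c_obj C. disj C X Y \<and> disj C X Z \<and> disj C Y Z \<longrightarrow>
        plus_o C (plus_o C X Y) Z = plus_o C X (plus_o C Y Z)) \<and>
     (\<forall>f g h. disj_m C f g \<and> disj_m C f h \<and> disj_m C g h \<longrightarrow>
        plus_m C (plus_m C f g) h = plus_m C f (plus_m C g h)) \<and>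
     (\<forall>X\<in>c_obj C. \<forall>Y\<in>c_obj C. disj C X Y \<longrightarrow> plus_o C X Y = plus_o C Y X) \<and>
     (\<forall>f g. disj_m C f g \<longrightarrow> plus_m C f g = plus_m C g f) \<and>
     (\<forall>u X Y. inj u \<and> X \<in> c_obj C \<and> Y \<in> c_obj C \<and> disj C X Y \<longrightarrow>
        act_o C u (plus_o C X Y) = plus_o C (act_o C u X) (act_o C u Y)) \<and>
     (\<forall>u v f g. inj u \<and> inj v \<and> disj_m C f g \<longrightarrow>
        act_m C v u (plus_m C f g) = plus_m C (act_m C v u f) (act_m C v u g))"

definition parsum_hom ::
  "('o, 'm, 'x) parsum_scheme \<Rightarrow> ('p, 'n, 'y) parsum_scheme \<Rightarrow> ('o \<Rightarrow> 'p) \<Rightarrow> ('m \<Rightarrow> 'n) \<Rightarrow> bool" where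
  "parsum_hom C D Fo Fm \<longleftrightarrow> is_functor C D Fo Fm \<and>
     (\<forall>u X. inj u \<and> X \<in> c_obj C \<longrightarrow> Fo (act_o C u X) = act_o D u (Fo X)) \<and>
     (\<forall>u v f. inj u \<and> inj v \<and> f \<in> c_arr C \<longrightarrow> Fm (act_m C v u f) = act_m D v u (Fm f)) \<and>
     Fo (zero C) = zero D \<and>
     (\<forall>X\<in>c_obj C. \<forall>Y\<in>c_obj C. disj C X Y \<longrightarrow> Fo (plus_o C X Y) = plus_o D (Fo X) (Fo Y)) \<and>
     (\<forall>f g. disj_m C f g \<longrightarrow> Fm (plus_m C f g) = plus_m D (Fm f) (Fm g))"

text \<open>The finite set {1..m} is modelled as {0..<m}; an injection m \<times> omega \<rightarrow> omega is a
  function nat \<times> nat \<Rightarrow> nat injective on {..<m} \<times> UNIV.\<close>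

definition inj_rep :: "nat \<Rightarrow> (nat \<times> nat \<Rightarrow> nat) \<Rightarrow> bool" where
  "inj_rep m \<phi> \<longleftrightarrow> inj_on \<phi> ({..<m} \<times> UNIV)"

definition push :: "('o, 'm, 'x) parsum_scheme \<Rightarrow> (nat \<times> nat \<Rightarrow> nat) \<Rightarrow> 'o list \<Rightarrow> 'o" where
  "push C \<phi> xs = foldr (\<lambda>a acc. plus_o C (act_o C (\<lambda>n. \<phi> (a, n)) (xs ! a)) acc)
                        [0..<length xs] (zero C)"

text \<open>[phi',phi]_X = sum over a of [phi'(a,-), phi(a,-)]_{X_a} : phi_*(X) \<rightarrow> phi'_*(X)\<close>
definition brk :: "('o, 'm, 'x) parsum_scheme \<Rightarrow> (nat \<times> nat \<Rightarrow> nat) \<Rightarrow> (nat \<times> nat \<Rightarrow> nat) \<Rightarrow> 'o list \<Rightarrow> 'm" where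
  "brk C \<phi>' \<phi> xs = foldr (\<lambda>a acc. plus_m C (act_m C (\<lambda>n. \<phi>' (a, n)) (\<lambda>n. \<phi> (a, n)) (c_id C (xs ! a))) acc)
                        [0..<length xs] (c_id C (zero C))"

type_synonym 'm sig_rep = "(nat \<times> nat \<Rightarrow> nat) \<times> 'm \<times> (nat \<times> nat \<Rightarrow> nat)"

definition is_sig_rep :: "('o, 'm, 'x) parsum_scheme \<Rightarrow> 'o list \<Rightarrow> 'o list \<Rightarrow> 'm sig_rep \<Rightarrow> bool" where
  "is_sig_rep C xs ys r \<longleftrightarrow> (case r of (\<psi>, f, \<phi>) \<Rightarrow>
     inj_rep (length xs) \<phi> \<and> inj_rep (length ys) \<psi> \<and> f \<in> hom C (push C \<phi> xs) (push C \<psi> ys))"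

definition sig_cls :: "('o, 'm, 'x) parsum_scheme \<Rightarrow> 'o list \<Rightarrow> 'o list \<Rightarrow> 'm sig_rep \<Rightarrow> 'm sig_rep set" where
  "sig_cls C xs ys r = (case r of (\<psi>, f, \<phi>) \<Rightarrow>
     {(\<psi>', c_comp C (brk C \<psi>' \<psi> ys) (c_comp C f (brk C \<phi> \<phi>' xs)), \<phi>') | \<psi>' \<phi>'.
        inj_rep (length xs) \<phi>' \<and> inj_rep (length ys) \<psi>'})"

type_synonym ('o, 'm) sig_arr = "'o list \<times> 'o list \<times> 'm sig_rep set"

definition sig_arrs :: "('o, 'm, 'x) parsum_scheme \<Rightarrow> ('o, 'm) sig_arr set" where
  "sig_arrs C = {(xs, ys, sig_cls C xs ys r) | xs ys r.
      xs \<in> lists (c_obj C) \<and> ys \<in> lists (c_obj C) \<and> is_sig_rep C xs ys r}"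

definition sig_comp :: "('o, 'm, 'x) parsum_scheme \<Rightarrow> ('o, 'm) sig_arr \<Rightarrow> ('o, 'm) sig_arr \<Rightarrow> ('o, 'm) sig_arr" where
  "sig_comp C \<beta> \<alpha> = (case \<alpha> of (xs, ys, c1) \<Rightarrow> case \<beta> of (_, zs, c2) \<Rightarrow>
      (case (SOME r. r \<in> c1) of (\<psi>, f, \<phi>) \<Rightarrow> case (SOME r. r \<in> c2) of (\<rho>, g, \<theta>) \<Rightarrow>
        (xs, zs, sig_cls C xs zs (\<rho>, c_comp C g (c_comp C (brk C \<theta> \<psi> ys) f), \<phi>))))"

definition sig_id :: "('o, 'm, 'x) parsum_scheme \<Rightarrow> 'o list \<Rightarrow> ('o, 'm) sig_arr" where
  "sig_id C xs = (xs, xs, sig_cls C xs xs (prod_encode, c_id C (push C prod_encode xs), prod_encode))"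

text \<open>Objects of Phi Sigma(C): sequences P_0, P_1, ... of objects of Sigma(C), almost all
  equal to the unit (empty list); Theta(C) requires each entry to be empty or a 1-tuple.\<close>
definition theta_obj :: "('o, 'm, 'x) parsum_scheme \<Rightarrow> (nat \<Rightarrow> 'o list) set" where
  "theta_obj C = {P. finite {i. P i \<noteq> []} \<and> (\<forall>i. length (P i) \<le> 1 \<and> set (P i) \<subseteq> c_obj C)}"

definition tens :: "(nat \<Rightarrow> 'o list) \<Rightarrow> 'o list" where
  "tens P = concat (map P (sorted_list_of_set {i. P i \<noteq> []}))"

type_synonym ('o, 'm) theta_arr = "(nat \<Rightarrow> 'o list) \<times> (nat \<Rightarrow> 'o list) \<times> 'm sig_rep set"

definition Theta :: "('o, 'm, 'x) parsum_scheme \<Rightarrow> (nat \<Rightarrow> 'o list, ('o, 'm) theta_arr) cat" where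
  "Theta C = \<lparr>
     c_obj = theta_obj C,
     c_arr = {(P, Q, c). P \<in> theta_obj C \<and> Q \<in> theta_obj C \<and> (tens P, tens Q, c) \<in> sig_arrs C},
     c_dom = (\<lambda>\<alpha>. fst \<alpha>),
     c_cod = (\<lambda>\<alpha>. fst (snd \<alpha>)),
     c_id = (\<lambda>P. (P, P, snd (snd (sig_id C (tens P))))),
     c_comp = (\<lambda>\<beta> \<alpha>. (fst \<alpha>, fst (snd \<beta>),
        snd (snd (sig_comp C (tens (fst \<beta>), tens (fst (snd \<beta>)), snd (snd \<beta>))
                             (tens (fst \<alpha>), tens (fst (snd \<alpha>)), snd (snd \<alpha>))))))\<rparr>"

definition Theta_obj_map :: "('o \<Rightarrow> 'p) \<Rightarrow> (nat \<Rightarrow> 'o list) \<Rightarrow> (nat \<Rightarrow> 'p list)" where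
  "Theta_obj_map Fo P = (\<lambda>i. map Fo (P i))"

definition Theta_arr_map :: "('o \<Rightarrow> 'p) \<Rightarrow> ('m \<Rightarrow> 'n) \<Rightarrow> ('o, 'm) theta_arr \<Rightarrow> ('p, 'n) theta_arr" where
  "Theta_arr_map Fo Fm \<alpha> = (case \<alpha> of (P, Q, c) \<Rightarrow>
     (Theta_obj_map Fo P, Theta_obj_map Fo Q, (\<lambda>(\<psi>, f, \<phi>). (\<psi>, Fm f, \<phi>)) ` c))"

definition theta_inj :: "(nat \<times> nat \<Rightarrow> nat) \<Rightarrow> (nat \<Rightarrow> 'o list) \<Rightarrow> (nat \<times> nat \<Rightarrow> nat)" where
  "theta_inj \<phi> P = (\<lambda>(a, n). \<phi> (sorted_list_of_set {i. P i \<noteq> []} ! a, n))"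

definition S_obj :: "(nat \<times> nat \<Rightarrow> nat) \<Rightarrow> ('o, 'm, 'x) parsum_scheme \<Rightarrow> (nat \<Rightarrow> 'o list) \<Rightarrow> 'o" where
  "S_obj \<phi> C P = push C (theta_inj \<phi> P) (tens P)"

definition S_arr :: "(nat \<times> nat \<Rightarrow> nat) \<Rightarrow> ('o, 'm, 'x) parsum_scheme \<Rightarrow> ('o, 'm) theta_arr \<Rightarrow> 'm" where
  "S_arr \<phi> C \<alpha> = (case \<alpha> of (P, Q, c) \<Rightarrow> THE f. (theta_inj \<phi> Q, f, theta_inj \<phi> P) \<in> c)"

end

theory Submission
  imports Defs "HOL-Library.Countable_Set"
begin

text \<open>A morphism of \<open>\<Theta>(C)\<close> is a class of representatives \<open>(\<psi>, f, \<phi>)\<close>, and two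
  representatives of one class differ by conjugation with the canonical isomorphisms
  \<open>[\<psi>', \<psi>]\<close>. These satisfy \<open>[\<psi>, \<psi>] = id\<close> and \<open>[\<psi>'', \<psi>'] [\<psi>', \<psi>] = [\<psi>'', \<psi>]\<close>, so
  every class has exactly one representative at the injections induced by the fixed \<open>\<phi>\<close>,
  and \<open>S\<close> is fully faithful. It is essentially surjective because
  \<open>[\<phi>(0,-), id]\<^sub>X : X \<cong> \<phi>(0,-)\<^sub>* X = S \<langle>{0}, X\<rangle>\<close>; these isomorphisms are natural and
  yield a quasi-inverse. All sums involved are defined because \<open>u\<^sub>*\<close> moves a finite support
  \<open>A\<close> of \<open>X\<close> to \<open>u(A)\<close>, which in turn rests on \<open>u\<^sub>* X\<close> depending only on \<open>u\<close> restricted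
  to \<open>A\<close>. Naturality in \<open>C\<close> holds because morphisms of parsummable categories commute with
  \<open>u\<^sub>*\<close>, \<open>+\<close> and \<open>0\<close>, and \<open>\<Theta>(F)\<close> acts on representatives by \<open>F\<close>.\<close>

lemma is_catI:
  assumes "\<forall>f\<in>c_arr C. c_dom C f \<in> c_obj C \<and> c_cod C f \<in> c_obj C"
    and "\<forall>X\<in>c_obj C. c_id C X \<in> hom C X X"
    and "\<forall>f\<in>c_arr C. \<forall>g\<in>c_arr C. c_cod C f = c_dom C g \<longrightarrow>
         c_comp C g f \<in> hom C (c_dom C f) (c_cod C g)"
    and "\<forall>f\<in>c_arr C. c_comp C f (c_id C (c_dom C f)) = f \<and> c_comp C (c_id C (c_cod C f)) f = f"
    and "\<forall>f\<in>c_arr C. \<forall>g\<in>c_arr C. \<forall>h\<in>c_arr C. c_cod C f = c_dom C g \<and> c_cod C g = c_dom C h \<longrightarrow>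
         c_comp C h (c_comp C g f) = c_comp C (c_comp C h g) f"
  shows "is_cat C"
  using assms unfolding is_cat_def by (intro conjI)

lemma is_functorI:
  assumes "is_cat A" "is_cat B" "\<forall>X\<in>c_obj A. Fo X \<in> c_obj B"
    "\<forall>f\<in>c_arr A. Fm f \<in> hom B (Fo (c_dom A f)) (Fo (c_cod A f))"
    "\<forall>X\<in>c_obj A. Fm (c_id A X) = c_id B (Fo X)"
    "\<forall>f\<in>c_arr A. \<forall>g\<in>c_arr A. c_cod A f = c_dom A g \<longrightarrow> Fm (c_comp A g f) = c_comp B (Fm g) (Fm f)"
  shows "is_functor A B Fo Fm"
  using assms unfolding is_functor_def by (intro conjI)

lemma nat_isoI:
  assumes "\<forall>X\<in>c_obj A. eta X \<in> hom B (Fo X) (Go X) \<and> is_iso B (eta X)"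
    "\<forall>f\<in>c_arr A. c_comp B (Gm f) (eta (c_dom A f)) = c_comp B (eta (c_cod A f)) (Fm f)"
  shows "nat_iso A B Fo Fm Go Gm eta"
  using assms unfolding nat_iso_def by (intro conjI)

lemma is_isoI:
  assumes "f \<in> hom C X Y" "g \<in> hom C Y X" "c_comp C g f = c_id C X" "c_comp C f g = c_id C Y"
  shows "is_iso C f"
  using assms unfolding is_iso_def hom_def by auto

locale category =
  fixes C :: "('o, 'm, 'x) cat_scheme"
  assumes is_cat: "is_cat C"
begin

lemma hom_objs: "f \<in> hom C X Y \<Longrightarrow> X \<in> c_obj C \<and> Y \<in> c_obj C"
  using is_cat unfolding is_cat_def hom_def by blast

lemma id_hom: "X \<in> c_obj C \<Longrightarrow> c_id C X \<in> hom C X X"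
  using is_cat unfolding is_cat_def by blast

lemma comp_hom: "f \<in> hom C X Y \<Longrightarrow> g \<in> hom C Y Z \<Longrightarrow> c_comp C g f \<in> hom C X Z"
  using is_cat unfolding is_cat_def by (auto simp: hom_def)

lemma comp_id_left: "f \<in> hom C X Y \<Longrightarrow> c_comp C (c_id C Y) f = f"
  using is_cat unfolding is_cat_def by (auto simp: hom_def)

lemma comp_id_right: "f \<in> hom C X Y \<Longrightarrow> c_comp C f (c_id C X) = f"
  using is_cat unfolding is_cat_def by (auto simp: hom_def)

lemma comp_assoc:
  "f \<in> hom C X Y \<Longrightarrow> g \<in> hom C Y Z \<Longrightarrow> h \<in> hom C Z W \<Longrightarrow>
   c_comp C (c_comp C h g) f = c_comp C h (c_comp C g f)"
  using is_cat unfolding is_cat_def by (auto simp: hom_def)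

lemma comp_arr:
  "f \<in> c_arr C \<Longrightarrow> g \<in> c_arr C \<Longrightarrow> c_cod C f = c_dom C g \<Longrightarrow> c_comp C g f \<in> c_arr C"
  and dom_comp:
  "f \<in> c_arr C \<Longrightarrow> g \<in> c_arr C \<Longrightarrow> c_cod C f = c_dom C g \<Longrightarrow> c_dom C (c_comp C g f) = c_dom C f"
  and cod_comp:
  "f \<in> c_arr C \<Longrightarrow> g \<in> c_arr C \<Longrightarrow> c_cod C f = c_dom C g \<Longrightarrow> c_cod C (c_comp C g f) = c_cod C g"
  using comp_hom[of f "c_dom C f" "c_cod C f" g "c_cod C g"] by (simp_all add: hom_def)

lemma comp_assoc_arr:
  "f \<in> c_arr C \<Longrightarrow> g \<in> c_arr C \<Longrightarrow> h \<in> c_arr C \<Longrightarrow> c_cod C f = c_dom C g \<Longrightarrow> c_cod C g = c_dom C h \<Longrightarrow>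
   c_comp C (c_comp C h g) f = c_comp C h (c_comp C g f)"
  using comp_assoc[of f "c_dom C f" "c_cod C f" g "c_cod C g" h "c_cod C h"] by (simp add: hom_def)

end

section \<open>The action of injections and supports\<close>

lemma inj_covering_images:
  fixes u v :: "nat \<Rightarrow> nat"
  assumes u: "inj u" and v: "inj v" and A: "finite A" and uv: "\<forall>a\<in>A. u a = v a"
  obtains w where "inj w" "\<forall>a\<in>A. w a = u a" "u ` (- A) \<subseteq> w ` (- A)" "v ` (- A) \<subseteq> w ` (- A)"
proof -
  define W where "W = u ` (- A) \<union> v ` (- A)"
  have inf_A: "infinite (- A)"
    using A by (simp add: Compl_eq_Diff_UNIV Diff_infinite_finite)
  then have "infinite W"
    unfolding W_def using u by (auto dest: finite_imageD inj_on_subset)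
  then have "bij_betw (from_nat_into W \<circ> to_nat_on (- A)) (- A) W"
    using inf_A by (intro bij_betw_trans[OF to_nat_on_infinite bij_betw_from_nat_into]) auto
  then obtain b where b: "bij_betw b (- A) W" ..
  define w where "w n = (if n \<in> A then u n else b n)" for n
  have wA: "w ` A = u ` A" and w_compl: "w ` (- A) = W"
    using b unfolding w_def bij_betw_def by auto
  have "inj_on w A"
    using inj_on_subset[OF u] by (simp add: w_def inj_on_def)
  moreover have "inj_on w (- A)"
    using b by (simp add: w_def bij_betw_def inj_on_def)
  moreover have "u ` A \<inter> W = {}"
    using u v uv unfolding W_def by (auto simp: inj_eq)
  ultimately have "inj_on w (A \<union> - A)"
    unfolding inj_on_Un by (simp add: Diff_eq wA w_compl)
  then show thesis
    using that w_compl unfolding W_def by (simp add: w_def)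
qed

locale em_category =
  fixes C :: "('o, 'm, 'x) parsum_scheme"
  assumes em_cat: "em_cat C"
begin

sublocale category C
  using em_cat by unfold_locales (simp add: em_cat_def)

lemma act_o_obj: "inj u \<Longrightarrow> X \<in> c_obj C \<Longrightarrow> act_o C u X \<in> c_obj C"
  using em_cat unfolding em_cat_def by simp

lemma act_m_hom:
  assumes "inj u" "inj v" "f \<in> hom C X Y"
  shows "act_m C v u f \<in> hom C (act_o C u X) (act_o C v Y)"
  using assms em_cat unfolding em_cat_def by (simp add: hom_def)

lemma act_m_id: "inj u \<Longrightarrow> X \<in> c_obj C \<Longrightarrow> act_m C u u (c_id C X) = c_id C (act_o C u X)"
  using em_cat unfolding em_cat_def by simp

lemma act_m_comp:
  assumes "inj u" "inj v" "inj w" "f \<in> hom C X Y" "g \<in> hom C Y Z"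
  shows "c_comp C (act_m C w v g) (act_m C v u f) = act_m C w u (c_comp C g f)"
  using assms em_cat unfolding em_cat_def by (simp add: hom_def)

lemma act_o_ident: "X \<in> c_obj C \<Longrightarrow> act_o C id X = X"
  using em_cat unfolding em_cat_def by simp

lemma act_m_ident: "f \<in> c_arr C \<Longrightarrow> act_m C id id f = f"
  using em_cat unfolding em_cat_def by simp

lemma act_o_act_o: "inj u \<Longrightarrow> inj v \<Longrightarrow> X \<in> c_obj C \<Longrightarrow> act_o C u (act_o C v X) = act_o C (u \<circ> v) X"
  using em_cat unfolding em_cat_def by simp

lemma act_m_comp_id_left:
  assumes "inj u" "inj v" "inj w" "f \<in> hom C X Y"
  shows "c_comp C (act_m C w v (c_id C Y)) (act_m C v u f) = act_m C w u f"
proof -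
  have "Y \<in> c_obj C"
    using hom_objs[OF assms(4)] by simp
  then show ?thesis
    using act_m_comp[OF assms id_hom] comp_id_left[OF assms(4)] by simp
qed

lemma act_m_comp_id_right:
  assumes "inj u" "inj v" "inj w" "f \<in> hom C X Y"
  shows "c_comp C (act_m C w v f) (act_m C v u (c_id C X)) = act_m C w u f"
proof -
  have "X \<in> c_obj C"
    using hom_objs[OF assms(4)] by simp
  then show ?thesis
    using act_m_comp[OF assms(1-3) id_hom assms(4)] comp_id_right[OF assms(4)] by simp
qed

lemma act_m_id_hom:
  "inj u \<Longrightarrow> inj v \<Longrightarrow> X \<in> c_obj C \<Longrightarrow> act_m C v u (c_id C X) \<in> hom C (act_o C u X) (act_o C v X)"
  using act_m_hom id_hom by blast

lemma act_m_id_iso: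
  assumes "inj u" "inj v" "X \<in> c_obj C"
  shows "c_comp C (act_m C u v (c_id C X)) (act_m C v u (c_id C X)) = c_id C (act_o C u X)"
  using act_m_comp_id_left[OF assms(1,2,1) id_hom[OF assms(3)]] act_m_id[OF assms(1,3)] by simp

lemma act_o_eq_if_image_subset:
  assumes X: "X \<in> c_obj C" and A: "supports C X A" and u: "inj u" and w: "inj w"
    and uw: "\<forall>a\<in>A. u a = w a" and sub: "u ` (- A) \<subseteq> w ` (- A)"
  shows "act_o C u X = act_o C w X"
proof -
  \<comment> \<open>\<open>u\<close> factors through \<open>w\<close> via an injection fixing \<open>A\<close> pointwise\<close>
  define \<tau> where "\<tau> n = (if n \<in> A then n else inv_into (- A) w (u n))" for n
  have "w \<circ> \<tau> = u"
  proof
    fix n show "(w \<circ> \<tau>) n = u n"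
      using uw sub by (cases "n \<in> A") (auto simp: \<tau>_def f_inv_into_f)
  qed
  then have \<tau>: "inj \<tau>"
    using u inj_on_imageI2 by metis
  have "act_o C u X = act_o C w (act_o C \<tau> X)"
    by (simp add: act_o_act_o[OF w \<tau> X] \<open>w \<circ> \<tau> = u\<close>)
  also have "act_o C \<tau> X = X"
    using A \<tau> unfolding supports_def \<tau>_def by simp
  finally show ?thesis .
qed

lemma act_o_eq_if_agree:
  assumes X: "X \<in> c_obj C" and "finite A" and A: "supports C X A" and u: "inj u" and v: "inj v"
    and uv: "\<forall>a\<in>A. u a = v a"
  shows "act_o C u X = act_o C v X"
proof -
  \<comment> \<open>the images of \<open>u\<close> and \<open>v\<close> off \<open>A\<close> may be disjoint, so compare both with a common \<open>w\<close>\<close>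
  obtain w where w: "inj w" "\<forall>a\<in>A. w a = u a" "u ` (- A) \<subseteq> w ` (- A)" "v ` (- A) \<subseteq> w ` (- A)"
    using inj_covering_images[OF u v \<open>finite A\<close> uv] .
  have "act_o C u X = act_o C w X"
    using act_o_eq_if_image_subset[OF X A u w(1)] w by simp
  also have "\<dots> = act_o C v X"
    using act_o_eq_if_image_subset[OF X A v w(1)] w uv by simp
  finally show ?thesis .
qed

lemma supports_act_o:
  assumes X: "X \<in> c_obj C" and "finite A" and A: "supports C X A" and u: "inj u"
  shows "supports C (act_o C u X) (u ` A)"
  unfolding supports_def
proof (intro allI impI)
  fix w assume w: "inj w \<and> (\<forall>a\<in>u ` A. w a = a)"
  have "act_o C w (act_o C u X) = act_o C (w \<circ> u) X"
    using act_o_act_o[OF _ u X] w by blast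
  also have "\<dots> = act_o C u X"
    by (rule act_o_eq_if_agree[OF X \<open>finite A\<close> A inj_compose[of w u] u]) (use w u in auto)
  finally show "act_o C w (act_o C u X) = act_o C u X" .
qed

end

lemma supp_subset: "finite A \<Longrightarrow> supports C X A \<Longrightarrow> supp C X \<subseteq> A"
  unfolding supp_def by blast

locale parsummable_category =
  fixes C :: "('o, 'm, 'x) parsum_scheme"
  assumes parsummable: "parsummable C"
begin

sublocale em_category C
  using parsummable by unfold_locales (simp add: parsummable_def)

lemma obj_finite_support: "X \<in> c_obj C \<Longrightarrow> \<exists>A. finite A \<and> supports C X A"
  using parsummable unfolding parsummable_def by simp

lemma zero_obj: "zero C \<in> c_obj C"
  using parsummable unfolding parsummable_def by simp

lemma supp_zero: "supp C (zero C) = {}"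
  using parsummable unfolding parsummable_def by simp

lemma plus_o_obj: "X \<in> c_obj C \<Longrightarrow> Y \<in> c_obj C \<Longrightarrow> disj C X Y \<Longrightarrow> plus_o C X Y \<in> c_obj C"
  using parsummable unfolding parsummable_def by simp

lemma plus_m_hom:
  assumes "f \<in> hom C X Y" "g \<in> hom C X' Y'" "disj C X X'" "disj C Y Y'"
  shows "plus_m C f g \<in> hom C (plus_o C X X') (plus_o C Y Y')"
  using assms parsummable unfolding parsummable_def by (simp add: hom_def disj_m_def)

lemma plus_m_id:
  "X \<in> c_obj C \<Longrightarrow> Y \<in> c_obj C \<Longrightarrow> disj C X Y \<Longrightarrow>
   plus_m C (c_id C X) (c_id C Y) = c_id C (plus_o C X Y)"
  using parsummable unfolding parsummable_def by simp

lemma plus_m_comp: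
  assumes "f \<in> hom C X Y" "g \<in> hom C X' Y'" "f' \<in> hom C Y Z" "g' \<in> hom C Y' Z'"
    and "disj C X X'" "disj C Y Y'" "disj C Z Z'"
  shows "c_comp C (plus_m C f' g') (plus_m C f g) = plus_m C (c_comp C f' f) (c_comp C g' g)"
  using assms parsummable unfolding parsummable_def by (simp add: hom_def disj_m_def)

lemma zero_plus_o: "X \<in> c_obj C \<Longrightarrow> plus_o C (zero C) X = X"
  using parsummable unfolding parsummable_def by simp

lemma plus_o_comm:
  assumes "X \<in> c_obj C" "Y \<in> c_obj C" "disj C X Y"
  shows "plus_o C X Y = plus_o C Y X"
proof -
  have "\<forall>X\<in>c_obj C. \<forall>Y\<in>c_obj C. disj C X Y \<longrightarrow> plus_o C X Y = plus_o C Y X"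
    using parsummable unfolding parsummable_def by (elim conjE)
  then show ?thesis
    using assms by blast
qed

lemma act_o_plus_o:
  "inj u \<Longrightarrow> X \<in> c_obj C \<Longrightarrow> Y \<in> c_obj C \<Longrightarrow> disj C X Y \<Longrightarrow>
   act_o C u (plus_o C X Y) = plus_o C (act_o C u X) (act_o C u Y)"
  using parsummable unfolding parsummable_def by simp

lemma plus_o_zero: "X \<in> c_obj C \<Longrightarrow> plus_o C X (zero C) = X"
  using plus_o_comm[OF _ zero_obj] zero_plus_o by (simp add: disj_def supp_zero)

lemma supports_plus_o:
  assumes X: "X \<in> c_obj C" and Y: "Y \<in> c_obj C" and "disj C X Y"
    and "supports C X A" and "supports C Y B"
  shows "supports C (plus_o C X Y) (A \<union> B)"
  using assms act_o_plus_o[OF _ X Y \<open>disj C X Y\<close>] unfolding supports_def by simp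

end

section \<open>Sums along injections\<close>

definition row :: "(nat \<times> nat \<Rightarrow> nat) \<Rightarrow> nat \<Rightarrow> nat \<Rightarrow> nat" where
  "row \<psi> a = (\<lambda>n. \<psi> (a, n))"

definition shift :: "(nat \<times> nat \<Rightarrow> nat) \<Rightarrow> nat \<times> nat \<Rightarrow> nat" where
  "shift \<psi> = (\<lambda>(a, n). \<psi> (Suc a, n))"

lemma foldr_upt_Suc: "foldr f [0..<Suc n] z = f 0 (foldr (\<lambda>a. f (Suc a)) [0..<n] z)"
  by (induct n arbitrary: z) (auto simp: upt_conv_Cons map_Suc_upt[symmetric] foldr_map o_def)

lemma push_Nil: "push C \<psi> [] = zero C"
  by (simp add: push_def)

lemma push_Cons: "push C \<psi> (x # xs) = plus_o C (act_o C (row \<psi> 0) x) (push C (shift \<psi>) xs)"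
  unfolding push_def length_Cons foldr_upt_Suc by (simp add: row_def shift_def)

lemma brk_Nil: "brk C \<psi>' \<psi> [] = c_id C (zero C)"
  by (simp add: brk_def)

lemma brk_Cons:
  "brk C \<psi>' \<psi> (x # xs) =
   plus_m C (act_m C (row \<psi>' 0) (row \<psi> 0) (c_id C x)) (brk C (shift \<psi>') (shift \<psi>) xs)"
  unfolding brk_def length_Cons foldr_upt_Suc by (simp add: row_def shift_def)

lemma inj_row: "inj_rep k \<psi> \<Longrightarrow> a < k \<Longrightarrow> inj (row \<psi> a)"
  unfolding inj_rep_def row_def by (auto simp: inj_on_def)

lemma inj_rep_shift:
  assumes "inj_rep (Suc k) \<psi>"
  shows "inj_rep k (shift \<psi>)"
  unfolding inj_rep_def
proof (rule inj_onI)
  fix x y assume x: "x \<in> {..<k} \<times> UNIV" and y: "y \<in> {..<k} \<times> UNIV"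
    and eq: "shift \<psi> x = shift \<psi> y"
  obtain a n b m where xy: "x = (a, n)" "y = (b, m)"
    by (cases x, cases y)
  have "(Suc a, n) = (Suc b, m)"
    using eq x y assms unfolding xy shift_def inj_rep_def by (simp add: inj_on_eq_iff)
  then show "x = y"
    unfolding xy by simp
qed

lemma range_row_Un_shift:
  "range (row \<psi> 0) \<union> shift \<psi> ` ({..<k} \<times> UNIV) = \<psi> ` ({..<Suc k} \<times> UNIV)"
proof -
  have "\<psi> (a, n) \<in> range (row \<psi> 0) \<union> shift \<psi> ` ({..<k} \<times> UNIV)" if "a < Suc k" for a n
    using that by (cases a) (auto simp: row_def shift_def image_iff)
  then show ?thesis
    by (auto simp: row_def shift_def)
qed

lemma range_row_shift_disjoint:
  assumes "inj_rep (Suc k) \<psi>"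
  shows "range (row \<psi> 0) \<inter> shift \<psi> ` ({..<k} \<times> UNIV) = {}"
  using assms unfolding inj_rep_def inj_on_def row_def shift_def by fastforce

text \<open>The zero object is admitted separately: \<^prop>\<open>supp C (zero C) = {}\<close> does not provide
  a finite support of the zero object.\<close>
definition supported_in :: "('o, 'm, 'x) parsum_scheme \<Rightarrow> 'o \<Rightarrow> nat set \<Rightarrow> bool" where
  "supported_in C X S \<longleftrightarrow> X \<in> c_obj C \<and> (X = zero C \<or> (\<exists>A. finite A \<and> A \<subseteq> S \<and> supports C X A))"

context parsummable_category
begin

lemma supp_subset_if_supported_in: "supported_in C X S \<Longrightarrow> supp C X \<subseteq> S"
  unfolding supported_in_def using supp_zero by (auto dest!: supp_subset)

lemma disj_if_supported_in:
  "supported_in C X S \<Longrightarrow> supported_in C Y T \<Longrightarrow> S \<inter> T = {} \<Longrightarrow> disj C X Y"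
  unfolding disj_def using supp_subset_if_supported_in by blast

lemma supported_in_mono: "supported_in C X S \<Longrightarrow> S \<subseteq> T \<Longrightarrow> supported_in C X T"
  unfolding supported_in_def by blast

lemma supported_in_zero: "supported_in C (zero C) S"
  by (simp add: supported_in_def zero_obj)

lemma supported_in_act_o:
  assumes "inj u" "X \<in> c_obj C"
  shows "supported_in C (act_o C u X) (range u)"
proof -
  obtain A where "finite A" "supports C X A"
    using obj_finite_support[OF \<open>X \<in> c_obj C\<close>] by blast
  then have "supports C (act_o C u X) (u ` A)"
    using assms supports_act_o by blast
  then show ?thesis
    unfolding supported_in_def using assms \<open>finite A\<close> act_o_obj
    by (intro conjI disjI2 exI[of _ "u ` A"]) auto
qed

lemma supported_in_plus_o:
  assumes X: "supported_in C X S" and Y: "supported_in C Y T" and "S \<inter> T = {}"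
  shows "supported_in C (plus_o C X Y) (S \<union> T)"
proof -
  have obj: "X \<in> c_obj C" "Y \<in> c_obj C" and d: "disj C X Y"
    using X Y disj_if_supported_in[OF X Y \<open>S \<inter> T = {}\<close>] by (auto simp: supported_in_def)
  consider "X = zero C" | "Y = zero C"
    | A B where "finite A" "A \<subseteq> S" "supports C X A" "finite B" "B \<subseteq> T" "supports C Y B"
    using X Y unfolding supported_in_def by blast
  then show ?thesis
  proof cases
    case 1
    then show ?thesis using Y zero_plus_o[OF obj(2)] supported_in_mono by auto
  next
    case 2
    then show ?thesis using X plus_o_zero[OF obj(1)] supported_in_mono by auto
  next
    case 3
    then show ?thesis
      unfolding supported_in_def
      using plus_o_obj[OF obj d] supports_plus_o[OF obj d] by (meson finite_UnI Un_mono)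
  qed
qed

lemma supported_in_push:
  "xs \<in> lists (c_obj C) \<Longrightarrow> inj_rep (length xs) \<psi> \<Longrightarrow>
   supported_in C (push C \<psi> xs) (\<psi> ` ({..<length xs} \<times> UNIV))"
proof (induct xs arbitrary: \<psi>)
  case Nil
  then show ?case by (simp add: push_Nil supported_in_zero)
next
  case (Cons x xs)
  have \<psi>: "inj_rep (Suc (length xs)) \<psi>"
    using Cons.prems by simp
  have "supported_in C (push C \<psi> (x # xs)) (range (row \<psi> 0) \<union> shift \<psi> ` ({..<length xs} \<times> UNIV))"
    unfolding push_Cons using Cons \<psi>
    by (intro supported_in_plus_o supported_in_act_o range_row_shift_disjoint inj_row[of "Suc (length xs)"])
      (auto intro: inj_rep_shift)
  then show ?case
    by (simp add: range_row_Un_shift)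
qed

lemma push_obj: "xs \<in> lists (c_obj C) \<Longrightarrow> inj_rep (length xs) \<psi> \<Longrightarrow> push C \<psi> xs \<in> c_obj C"
  using supported_in_push unfolding supported_in_def by simp

lemma disj_push_Cons:
  assumes "x \<in> c_obj C" "xs \<in> lists (c_obj C)" "inj_rep (Suc (length xs)) \<psi>"
  shows "disj C (act_o C (row \<psi> 0) x) (push C (shift \<psi>) xs)"
  using assms
  by (intro disj_if_supported_in[OF supported_in_act_o supported_in_push range_row_shift_disjoint])
    (auto intro: inj_row inj_rep_shift)

lemma brk_hom:
  "xs \<in> lists (c_obj C) \<Longrightarrow> inj_rep (length xs) \<psi> \<Longrightarrow> inj_rep (length xs) \<psi>' \<Longrightarrow>
   brk C \<psi>' \<psi> xs \<in> hom C (push C \<psi> xs) (push C \<psi>' xs)"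
proof (induct xs arbitrary: \<psi> \<psi>')
  case Nil
  then show ?case by (simp add: push_Nil brk_Nil id_hom zero_obj)
next
  case (Cons x xs)
  then have x: "x \<in> c_obj C" and xs: "xs \<in> lists (c_obj C)"
    and \<psi>: "inj_rep (Suc (length xs)) \<psi>" "inj_rep (Suc (length xs)) \<psi>'"
    by simp_all
  show ?case
    unfolding brk_Cons push_Cons
    using Cons.hyps[OF xs inj_rep_shift[OF \<psi>(1)] inj_rep_shift[OF \<psi>(2)]]
      act_m_hom[OF inj_row[OF \<psi>(1)] inj_row[OF \<psi>(2)] id_hom[OF x]]
    by (intro plus_m_hom disj_push_Cons[OF x xs] \<psi>) simp_all
qed

lemma brk_same: "xs \<in> lists (c_obj C) \<Longrightarrow> inj_rep (length xs) \<psi> \<Longrightarrow> brk C \<psi> \<psi> xs = c_id C (push C \<psi> xs)"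
proof (induct xs arbitrary: \<psi>)
  case Nil
  then show ?case by (simp add: push_Nil brk_Nil)
next
  case (Cons x xs)
  then have x: "x \<in> c_obj C" and xs: "xs \<in> lists (c_obj C)" and \<psi>: "inj_rep (Suc (length xs)) \<psi>"
    by simp_all
  have row: "inj (row \<psi> 0)"
    using inj_row[OF \<psi>] by simp
  show ?case
    unfolding brk_Cons push_Cons Cons.hyps[OF xs inj_rep_shift[OF \<psi>]] act_m_id[OF row x]
    by (rule plus_m_id[OF act_o_obj[OF row x] push_obj[OF xs inj_rep_shift[OF \<psi>]] disj_push_Cons[OF x xs \<psi>]])
qed

lemma brk_comp:
  "xs \<in> lists (c_obj C) \<Longrightarrow> inj_rep (length xs) \<psi> \<Longrightarrow> inj_rep (length xs) \<psi>' \<Longrightarrow> inj_rep (length xs) \<psi>'' \<Longrightarrow>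
   c_comp C (brk C \<psi>'' \<psi>' xs) (brk C \<psi>' \<psi> xs) = brk C \<psi>'' \<psi> xs"
proof (induct xs arbitrary: \<psi> \<psi>' \<psi>'')
  case Nil
  then show ?case by (simp add: brk_Nil comp_id_left[OF id_hom[OF zero_obj]])
next
  case (Cons x xs)
  then have x: "x \<in> c_obj C" and xs: "xs \<in> lists (c_obj C)"
    and \<psi>: "inj_rep (Suc (length xs)) \<psi>" "inj_rep (Suc (length xs)) \<psi>'" "inj_rep (Suc (length xs)) \<psi>''"
    by simp_all
  have row: "inj (row \<psi> 0)" "inj (row \<psi>' 0)" "inj (row \<psi>'' 0)"
    using inj_row \<psi> by auto
  have shift: "inj_rep (length xs) (shift \<psi>)" "inj_rep (length xs) (shift \<psi>')" "inj_rep (length xs) (shift \<psi>'')"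
    using inj_rep_shift \<psi> by auto
  show ?case
    unfolding brk_Cons
    by (simp add: plus_m_comp[OF act_m_hom[OF row(1,2) id_hom[OF x]] brk_hom[OF xs shift(1,2)]
          act_m_hom[OF row(2,3) id_hom[OF x]] brk_hom[OF xs shift(2,3)]
          disj_push_Cons[OF x xs \<psi>(1)] disj_push_Cons[OF x xs \<psi>(2)] disj_push_Cons[OF x xs \<psi>(3)]]
        Cons.hyps[OF xs shift] act_m_comp[OF row id_hom[OF x] id_hom[OF x]] comp_id_left[OF id_hom[OF x]])
qed

lemma brk_arr:
  "xs \<in> lists (c_obj C) \<Longrightarrow> inj_rep (length xs) \<psi> \<Longrightarrow> inj_rep (length xs) \<psi>' \<Longrightarrow> brk C \<psi>' \<psi> xs \<in> c_arr C"
  and dom_brk: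
  "xs \<in> lists (c_obj C) \<Longrightarrow> inj_rep (length xs) \<psi> \<Longrightarrow> inj_rep (length xs) \<psi>' \<Longrightarrow> c_dom C (brk C \<psi>' \<psi> xs) = push C \<psi> xs"
  and cod_brk:
  "xs \<in> lists (c_obj C) \<Longrightarrow> inj_rep (length xs) \<psi> \<Longrightarrow> inj_rep (length xs) \<psi>' \<Longrightarrow> c_cod C (brk C \<psi>' \<psi> xs) = push C \<psi>' xs"
  using brk_hom[of xs \<psi> \<psi>'] by (simp_all add: hom_def)

lemma brk_comp_assoc:
  "xs \<in> lists (c_obj C) \<Longrightarrow> inj_rep (length xs) \<psi> \<Longrightarrow> inj_rep (length xs) \<psi>' \<Longrightarrow> inj_rep (length xs) \<psi>'' \<Longrightarrow>
   h \<in> c_arr C \<Longrightarrow> c_cod C h = push C \<psi> xs \<Longrightarrow>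
   c_comp C (brk C \<psi>'' \<psi>' xs) (c_comp C (brk C \<psi>' \<psi> xs) h) = c_comp C (brk C \<psi>'' \<psi> xs) h"
  by (simp flip: comp_assoc_arr add: comp_arr dom_comp cod_comp brk_arr dom_brk cod_brk brk_comp)

text \<open>Rewriting with these rules reassociates composites to the right and merges adjacent
  brackets \<open>[\<psi>'', \<psi>'] [\<psi>', \<psi>]\<close>; this settles the coherence identities below.\<close>
lemmas brk_normalize =
  comp_arr dom_comp cod_comp comp_assoc_arr brk_arr dom_brk cod_brk brk_comp brk_comp_assoc

end

section \<open>Representatives of morphisms of \<open>\<Sigma>(C)\<close>\<close>

definition reindex ::
  "('o, 'm, 'x) parsum_scheme \<Rightarrow> 'o list \<Rightarrow> 'o list \<Rightarrow> (nat \<times> nat \<Rightarrow> nat) \<Rightarrow> (nat \<times> nat \<Rightarrow> nat)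
    \<Rightarrow> 'm sig_rep \<Rightarrow> 'm" where
  "reindex C xs ys \<psi>' \<phi>' r = (case r of (\<psi>, f, \<phi>) \<Rightarrow> c_comp C (brk C \<psi>' \<psi> ys) (c_comp C f (brk C \<phi> \<phi>' xs)))"

lemma mem_sig_cls_iff:
  "(\<psi>', f', \<phi>') \<in> sig_cls C xs ys r \<longleftrightarrow>
   inj_rep (length xs) \<phi>' \<and> inj_rep (length ys) \<psi>' \<and> f' = reindex C xs ys \<psi>' \<phi>' r"
  unfolding sig_cls_def reindex_def by (cases r) auto

context parsummable_category
begin

lemma reindex_reindex:
  assumes "xs \<in> lists (c_obj C)" "ys \<in> lists (c_obj C)" "is_sig_rep C xs ys r"
    "inj_rep (length xs) \<phi>'" "inj_rep (length ys) \<psi>'" "inj_rep (length xs) \<phi>''" "inj_rep (length ys) \<psi>''"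
  shows "reindex C xs ys \<psi>'' \<phi>'' (\<psi>', reindex C xs ys \<psi>' \<phi>' r, \<phi>') = reindex C xs ys \<psi>'' \<phi>'' r"
  using assms
  by (cases r) (simp add: reindex_def is_sig_rep_def hom_def brk_normalize)

lemma reindex_hom:
  assumes "xs \<in> lists (c_obj C)" "ys \<in> lists (c_obj C)" "is_sig_rep C xs ys r"
    "inj_rep (length xs) \<phi>'" "inj_rep (length ys) \<psi>'"
  shows "reindex C xs ys \<psi>' \<phi>' r \<in> hom C (push C \<phi>' xs) (push C \<psi>' ys)"
  using assms by (cases r) (simp add: reindex_def is_sig_rep_def hom_def brk_normalize)

lemma reindex_same:
  assumes "xs \<in> lists (c_obj C)" "ys \<in> lists (c_obj C)" "is_sig_rep C xs ys (\<psi>, f, \<phi>)"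
  shows "reindex C xs ys \<psi> \<phi> (\<psi>, f, \<phi>) = f"
proof -
  have "inj_rep (length xs) \<phi>" "inj_rep (length ys) \<psi>" and f: "f \<in> hom C (push C \<phi> xs) (push C \<psi> ys)"
    using assms(3) by (simp_all add: is_sig_rep_def)
  then show ?thesis
    using assms(1,2) by (simp add: reindex_def brk_same comp_id_left[OF f] comp_id_right[OF f])
qed

lemma sig_cls_eq:
  assumes "xs \<in> lists (c_obj C)" "ys \<in> lists (c_obj C)" "is_sig_rep C xs ys r"
    and "r' \<in> sig_cls C xs ys r"
  shows "sig_cls C xs ys r' = sig_cls C xs ys r"
proof -
  obtain \<psi>' f' \<phi>' where r': "r' = (\<psi>', f', \<phi>')"
    by (cases r')
  then have \<phi>': "inj_rep (length xs) \<phi>'" and \<psi>': "inj_rep (length ys) \<psi>'"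
    and f': "f' = reindex C xs ys \<psi>' \<phi>' r"
    using assms(4) unfolding r' mem_sig_cls_iff by simp_all
  have "t \<in> sig_cls C xs ys r' \<longleftrightarrow> t \<in> sig_cls C xs ys r" for t
    using reindex_reindex[OF assms(1-3) \<phi>' \<psi>', of "snd (snd t)" "fst t"]
    unfolding r' f' by (cases t) (auto simp: mem_sig_cls_iff)
  then show ?thesis
    by blast
qed

lemma brk_comp_reindex:
  assumes "xs \<in> lists (c_obj C)" "ys \<in> lists (c_obj C)" "is_sig_rep C xs ys r"
    and "inj_rep (length xs) \<phi>'" "inj_rep (length ys) \<psi>'" "inj_rep (length ys) \<psi>''"
  shows "c_comp C (brk C \<psi>'' \<psi>' ys) (reindex C xs ys \<psi>' \<phi>' r) = reindex C xs ys \<psi>'' \<phi>' r"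
  using assms by (cases r) (simp add: reindex_def is_sig_rep_def hom_def brk_normalize)

lemma reindex_comp_reindex:
  assumes "xs \<in> lists (c_obj C)" "ys \<in> lists (c_obj C)" "zs \<in> lists (c_obj C)"
    and "is_sig_rep C xs ys (\<psi>, f, \<phi>)" "is_sig_rep C ys zs (\<rho>, g, \<theta>)"
    and "inj_rep (length xs) \<phi>'" "inj_rep (length ys) \<theta>'" "inj_rep (length zs) \<rho>'"
  shows "c_comp C (reindex C ys zs \<rho>' \<theta>' (\<rho>, g, \<theta>)) (reindex C xs ys \<theta>' \<phi>' (\<psi>, f, \<phi>))
    = reindex C xs zs \<rho>' \<phi>' (\<rho>, c_comp C g (c_comp C (brk C \<theta> \<psi> ys) f), \<phi>)"
  using assms by (simp add: reindex_def is_sig_rep_def hom_def brk_normalize)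

lemma some_in_sig_cls:
  assumes "xs \<in> lists (c_obj C)" "ys \<in> lists (c_obj C)" "is_sig_rep C xs ys r"
  obtains \<psi>' f' \<phi>' where "(SOME r'. r' \<in> sig_cls C xs ys r) = (\<psi>', f', \<phi>')"
    "inj_rep (length xs) \<phi>'" "inj_rep (length ys) \<psi>'" "f' = reindex C xs ys \<psi>' \<phi>' r"
proof -
  obtain \<psi> f \<phi> where r: "r = (\<psi>, f, \<phi>)"
    by (cases r)
  have "r \<in> sig_cls C xs ys r"
    using assms reindex_same unfolding r mem_sig_cls_iff is_sig_rep_def by simp
  then have "(SOME r'. r' \<in> sig_cls C xs ys r) \<in> sig_cls C xs ys r"
    by (rule someI)
  then show thesis
    using that by (cases "SOME r'. r' \<in> sig_cls C xs ys r") (simp add: mem_sig_cls_iff)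
qed

lemma sig_id_eq:
  assumes xs: "xs \<in> lists (c_obj C)" and \<psi>: "inj_rep (length xs) \<psi>"
  shows "sig_id C xs = (xs, xs, sig_cls C xs xs (\<psi>, c_id C (push C \<psi> xs), \<psi>))"
proof -
  have pe: "inj_rep (length xs) prod_encode"
    by (simp add: inj_rep_def inj_prod_encode)
  have rep: "is_sig_rep C xs xs (prod_encode, c_id C (push C prod_encode xs), prod_encode)"
    using pe id_hom[OF push_obj[OF xs pe]] by (simp add: is_sig_rep_def)
  have "reindex C xs xs \<psi> \<psi> (prod_encode, c_id C (push C prod_encode xs), prod_encode) = c_id C (push C \<psi> xs)"
    using xs \<psi> pe by (simp add: reindex_def comp_id_left[OF brk_hom[OF xs \<psi> pe]] brk_comp brk_same)
  then have "(\<psi>, c_id C (push C \<psi> xs), \<psi>) \<in> sig_cls C xs xs (prod_encode, c_id C (push C prod_encode xs), prod_encode)"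
    using \<psi> by (simp add: mem_sig_cls_iff)
  then show ?thesis
    unfolding sig_id_def using sig_cls_eq[OF xs xs rep] by simp
qed

lemma sig_comp_eq:
  assumes xs: "xs \<in> lists (c_obj C)" and ys: "ys \<in> lists (c_obj C)" and zs: "zs \<in> lists (c_obj C)"
    and f: "is_sig_rep C xs ys (\<psi>, f, \<phi>)" and g: "is_sig_rep C ys zs (\<rho>, g, \<theta>)"
  shows "sig_comp C (ys, zs, sig_cls C ys zs (\<rho>, g, \<theta>)) (xs, ys, sig_cls C xs ys (\<psi>, f, \<phi>)) =
    (xs, zs, sig_cls C xs zs (\<rho>, c_comp C g (c_comp C (brk C \<theta> \<psi> ys) f), \<phi>))"
proof -
  obtain \<psi>' f' \<phi>' where f': "(SOME r. r \<in> sig_cls C xs ys (\<psi>, f, \<phi>)) = (\<psi>', f', \<phi>')"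
    "inj_rep (length xs) \<phi>'" "inj_rep (length ys) \<psi>'" "f' = reindex C xs ys \<psi>' \<phi>' (\<psi>, f, \<phi>)"
    using some_in_sig_cls[OF xs ys f] .
  obtain \<rho>' g' \<theta>' where g': "(SOME r. r \<in> sig_cls C ys zs (\<rho>, g, \<theta>)) = (\<rho>', g', \<theta>')"
    "inj_rep (length ys) \<theta>'" "inj_rep (length zs) \<rho>'" "g' = reindex C ys zs \<rho>' \<theta>' (\<rho>, g, \<theta>)"
    using some_in_sig_cls[OF ys zs g] .
  have "c_comp C g' (c_comp C (brk C \<theta>' \<psi>' ys) f') =
      reindex C xs zs \<rho>' \<phi>' (\<rho>, c_comp C g (c_comp C (brk C \<theta> \<psi> ys) f), \<phi>)"
    unfolding f'(4) g'(4) brk_comp_reindex[OF xs ys f f'(2,3) g'(2)]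
    by (rule reindex_comp_reindex[OF xs ys zs f g f'(2) g'(2,3)])
  then have "(\<rho>', c_comp C g' (c_comp C (brk C \<theta>' \<psi>' ys) f'), \<phi>') \<in>
      sig_cls C xs zs (\<rho>, c_comp C g (c_comp C (brk C \<theta> \<psi> ys) f), \<phi>)"
    using f'(2) g'(3) by (simp add: mem_sig_cls_iff)
  moreover have "is_sig_rep C xs zs (\<rho>, c_comp C g (c_comp C (brk C \<theta> \<psi> ys) f), \<phi>)"
  proof -
    have "f \<in> hom C (push C \<phi> xs) (push C \<psi> ys)" "g \<in> hom C (push C \<theta> ys) (push C \<rho> zs)"
      "inj_rep (length ys) \<psi>" "inj_rep (length ys) \<theta>"
      using f g by (simp_all add: is_sig_rep_def)
    then show ?thesis
      using f g comp_hom[OF comp_hom[OF _ brk_hom[OF ys]]] by (simp add: is_sig_rep_def)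
  qed
  ultimately show ?thesis
    unfolding sig_comp_def using f'(1) g'(1) sig_cls_eq[OF xs zs] by simp
qed

end

section \<open>The category \<open>\<Theta>(C)\<close> and the functor \<open>S\<close>\<close>

lemma Theta_simps:
  "c_obj (Theta C) = theta_obj C"
  "c_arr (Theta C) = {(P, Q, c). P \<in> theta_obj C \<and> Q \<in> theta_obj C \<and> (tens P, tens Q, c) \<in> sig_arrs C}"
  "c_dom (Theta C) = fst"
  "c_cod (Theta C) = (\<lambda>\<alpha>. fst (snd \<alpha>))"
  "c_id (Theta C) P = (P, P, snd (snd (sig_id C (tens P))))"
  "c_comp (Theta C) \<beta> \<alpha> = (fst \<alpha>, fst (snd \<beta>),
     snd (snd (sig_comp C (tens (fst \<beta>), tens (fst (snd \<beta>)), snd (snd \<beta>))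
                          (tens (fst \<alpha>), tens (fst (snd \<alpha>)), snd (snd \<alpha>)))))"
  by (simp_all add: Theta_def fun_eq_iff)

lemma tens_eq_map_hd:
  assumes "P \<in> theta_obj C"
  shows "tens P = map (hd \<circ> P) (sorted_list_of_set {i. P i \<noteq> []})"
proof -
  have "P i = [hd (P i)]" if "P i \<noteq> []" for i
  proof -
    have "length (P i) \<le> 1"
      using assms by (simp add: theta_obj_def)
    then show ?thesis
      using that by (cases "P i") auto
  qed
  moreover have "finite {i. P i \<noteq> []}"
    using assms by (simp add: theta_obj_def)
  ultimately have "map P (sorted_list_of_set {i. P i \<noteq> []}) =
      map (\<lambda>i. [hd (P i)]) (sorted_list_of_set {i. P i \<noteq> []})"
    by (intro map_cong) simp_all
  then show ?thesis
    unfolding tens_def by (simp only: concat_map_singleton comp_def)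
qed

lemma tens_in_lists: "P \<in> theta_obj C \<Longrightarrow> tens P \<in> lists (c_obj C)"
  unfolding theta_obj_def tens_def by force

lemma inj_rep_theta_inj:
  assumes "inj \<phi>" "P \<in> theta_obj C"
  shows "inj_rep (length (tens P)) (theta_inj \<phi> P)"
proof -
  let ?L = "sorted_list_of_set {i. P i \<noteq> []}"
  have "inj_on (\<lambda>(a, n). (?L ! a, n)) ({..<length ?L} \<times> UNIV)"
    by (auto simp: inj_on_def nth_eq_iff_index_eq)
  then have "inj_on (\<phi> \<circ> (\<lambda>(a, n). (?L ! a, n))) ({..<length ?L} \<times> UNIV)"
    using \<open>inj \<phi>\<close> by (intro comp_inj_on) (auto intro: inj_on_subset)
  then show ?thesis
    unfolding inj_rep_def tens_eq_map_hd[OF assms(2)] theta_inj_def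
    by (simp add: o_def case_prod_beta')
qed

locale Theta_realization = parsummable_category C for C :: "('o, 'm, 'x) parsum_scheme" +
  fixes \<phi> :: "nat \<times> nat \<Rightarrow> nat"
  assumes inj_\<phi>: "inj \<phi>"
begin

lemma is_sig_rep_theta_inj_iff:
  assumes "P \<in> theta_obj C" "Q \<in> theta_obj C"
  shows "is_sig_rep C (tens P) (tens Q) (theta_inj \<phi> Q, h, theta_inj \<phi> P) \<longleftrightarrow>
    h \<in> hom C (S_obj \<phi> C P) (S_obj \<phi> C Q)"
  using inj_rep_theta_inj[OF inj_\<phi> assms(1)] inj_rep_theta_inj[OF inj_\<phi> assms(2)]
  by (simp add: is_sig_rep_def S_obj_def)

lemma S_obj_obj: "P \<in> theta_obj C \<Longrightarrow> S_obj \<phi> C P \<in> c_obj C"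
  unfolding S_obj_def by (rule push_obj[OF tens_in_lists inj_rep_theta_inj[OF inj_\<phi>]])

definition lift :: "(nat \<Rightarrow> 'o list) \<Rightarrow> (nat \<Rightarrow> 'o list) \<Rightarrow> 'm \<Rightarrow> ('o, 'm) theta_arr" where
  "lift P Q h = (P, Q, sig_cls C (tens P) (tens Q) (theta_inj \<phi> Q, h, theta_inj \<phi> P))"

lemma lift_in_hom:
  assumes "P \<in> theta_obj C" "Q \<in> theta_obj C" "h \<in> hom C (S_obj \<phi> C P) (S_obj \<phi> C Q)"
  shows "lift P Q h \<in> hom (Theta C) P Q"
proof -
  have "(tens P, tens Q, sig_cls C (tens P) (tens Q) (theta_inj \<phi> Q, h, theta_inj \<phi> P)) \<in> sig_arrs C"
    using assms tens_in_lists is_sig_rep_theta_inj_iff unfolding sig_arrs_def by blast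
  then show ?thesis
    using assms by (simp add: lift_def hom_def Theta_simps)
qed

lemma S_arr_lift:
  assumes "P \<in> theta_obj C" "Q \<in> theta_obj C" "h \<in> hom C (S_obj \<phi> C P) (S_obj \<phi> C Q)"
  shows "S_arr \<phi> C (lift P Q h) = h"
proof -
  have "is_sig_rep C (tens P) (tens Q) (theta_inj \<phi> Q, h, theta_inj \<phi> P)"
    using assms is_sig_rep_theta_inj_iff by blast
  then show ?thesis
    unfolding lift_def S_arr_def prod.case
    using assms reindex_same[OF tens_in_lists[OF assms(1)] tens_in_lists[OF assms(2)]]
      inj_rep_theta_inj[OF inj_\<phi> assms(1)] inj_rep_theta_inj[OF inj_\<phi> assms(2)]
    by (intro the_equality) (simp_all add: mem_sig_cls_iff)
qed

lemma Theta_arrE: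
  assumes "\<alpha> \<in> c_arr (Theta C)"
  obtains P Q h where "\<alpha> = lift P Q h" "P \<in> theta_obj C" "Q \<in> theta_obj C"
    "h \<in> hom C (S_obj \<phi> C P) (S_obj \<phi> C Q)"
proof -
  obtain P Q r where \<alpha>: "\<alpha> = (P, Q, sig_cls C (tens P) (tens Q) r)"
    and P: "P \<in> theta_obj C" and Q: "Q \<in> theta_obj C" and r: "is_sig_rep C (tens P) (tens Q) r"
    using assms unfolding Theta_simps sig_arrs_def by auto
  note lists = tens_in_lists[OF P] tens_in_lists[OF Q]
  note inj_reps = inj_rep_theta_inj[OF inj_\<phi> P] inj_rep_theta_inj[OF inj_\<phi> Q]
  define h where "h = reindex C (tens P) (tens Q) (theta_inj \<phi> Q) (theta_inj \<phi> P) r"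
  have "(theta_inj \<phi> Q, h, theta_inj \<phi> P) \<in> sig_cls C (tens P) (tens Q) r"
    using inj_reps by (simp add: mem_sig_cls_iff h_def)
  then have "\<alpha> = lift P Q h"
    unfolding \<alpha> lift_def using sig_cls_eq[OF lists r] by simp
  moreover have "h \<in> hom C (S_obj \<phi> C P) (S_obj \<phi> C Q)"
    unfolding h_def S_obj_def by (rule reindex_hom[OF lists r inj_reps])
  ultimately show thesis
    using that P Q by blast
qed

lemma Theta_id_eq_lift: "P \<in> theta_obj C \<Longrightarrow> c_id (Theta C) P = lift P P (c_id C (S_obj \<phi> C P))"
  by (simp add: Theta_simps lift_def S_obj_def sig_id_eq[OF tens_in_lists inj_rep_theta_inj[OF inj_\<phi>]])

lemma Theta_comp_lift:
  assumes P: "P \<in> theta_obj C" and Q: "Q \<in> theta_obj C" and R: "R \<in> theta_obj C"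
    and f: "f \<in> hom C (S_obj \<phi> C P) (S_obj \<phi> C Q)" and g: "g \<in> hom C (S_obj \<phi> C Q) (S_obj \<phi> C R)"
  shows "c_comp (Theta C) (lift Q R g) (lift P Q f) = lift P R (c_comp C g f)"
proof -
  have "c_comp C (brk C (theta_inj \<phi> Q) (theta_inj \<phi> Q) (tens Q)) f = f"
    using f unfolding brk_same[OF tens_in_lists[OF Q] inj_rep_theta_inj[OF inj_\<phi> Q]] S_obj_def
    by (rule comp_id_left)
  then show ?thesis
    using sig_comp_eq[OF tens_in_lists[OF P] tens_in_lists[OF Q] tens_in_lists[OF R]
        is_sig_rep_theta_inj_iff[THEN iffD2, OF P Q f] is_sig_rep_theta_inj_iff[THEN iffD2, OF Q R g]]
    by (simp add: Theta_simps lift_def)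
qed

lemma Theta_dom_lift [simp]: "c_dom (Theta C) (lift P Q h) = P"
  and Theta_cod_lift [simp]: "c_cod (Theta C) (lift P Q h) = Q"
  by (simp_all add: Theta_simps lift_def)

lemma is_cat_Theta: "is_cat (Theta C)"
proof (rule is_catI)
  show "\<forall>\<alpha>\<in>c_arr (Theta C). c_dom (Theta C) \<alpha> \<in> c_obj (Theta C) \<and> c_cod (Theta C) \<alpha> \<in> c_obj (Theta C)"
    by (auto simp: Theta_simps)
  show "\<forall>P\<in>c_obj (Theta C). c_id (Theta C) P \<in> hom (Theta C) P P"
    by (simp add: Theta_simps(1) Theta_id_eq_lift lift_in_hom id_hom S_obj_obj)
  show "\<forall>\<alpha>\<in>c_arr (Theta C). \<forall>\<beta>\<in>c_arr (Theta C). c_cod (Theta C) \<alpha> = c_dom (Theta C) \<beta> \<longrightarrow>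
      c_comp (Theta C) \<beta> \<alpha> \<in> hom (Theta C) (c_dom (Theta C) \<alpha>) (c_cod (Theta C) \<beta>)"
    by (auto elim!: Theta_arrE simp: Theta_comp_lift intro!: lift_in_hom comp_hom)
  show "\<forall>\<alpha>\<in>c_arr (Theta C). c_comp (Theta C) \<alpha> (c_id (Theta C) (c_dom (Theta C) \<alpha>)) = \<alpha> \<and>
      c_comp (Theta C) (c_id (Theta C) (c_cod (Theta C) \<alpha>)) \<alpha> = \<alpha>"
    by (auto elim!: Theta_arrE simp: Theta_id_eq_lift Theta_comp_lift id_hom S_obj_obj comp_id_left comp_id_right)
  show "\<forall>\<alpha>\<in>c_arr (Theta C). \<forall>\<beta>\<in>c_arr (Theta C). \<forall>\<gamma>\<in>c_arr (Theta C).
      c_cod (Theta C) \<alpha> = c_dom (Theta C) \<beta> \<and> c_cod (Theta C) \<beta> = c_dom (Theta C) \<gamma> \<longrightarrow>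
      c_comp (Theta C) \<gamma> (c_comp (Theta C) \<beta> \<alpha>) = c_comp (Theta C) (c_comp (Theta C) \<gamma> \<beta>) \<alpha>"
    by (auto elim!: Theta_arrE simp: Theta_comp_lift comp_hom comp_assoc)
qed

lemma is_functor_S: "is_functor (Theta C) C (S_obj \<phi> C) (S_arr \<phi> C)"
proof (rule is_functorI[OF is_cat_Theta is_cat])
  show "\<forall>P\<in>c_obj (Theta C). S_obj \<phi> C P \<in> c_obj C"
    by (simp add: Theta_simps S_obj_obj)
  show "\<forall>\<alpha>\<in>c_arr (Theta C). S_arr \<phi> C \<alpha> \<in> hom C (S_obj \<phi> C (c_dom (Theta C) \<alpha>)) (S_obj \<phi> C (c_cod (Theta C) \<alpha>))"
    by (auto elim!: Theta_arrE simp: S_arr_lift)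
  show "\<forall>P\<in>c_obj (Theta C). S_arr \<phi> C (c_id (Theta C) P) = c_id C (S_obj \<phi> C P)"
    by (simp add: Theta_simps(1) Theta_id_eq_lift S_arr_lift id_hom S_obj_obj)
  show "\<forall>\<alpha>\<in>c_arr (Theta C). \<forall>\<beta>\<in>c_arr (Theta C). c_cod (Theta C) \<alpha> = c_dom (Theta C) \<beta> \<longrightarrow>
      S_arr \<phi> C (c_comp (Theta C) \<beta> \<alpha>) = c_comp C (S_arr \<phi> C \<beta>) (S_arr \<phi> C \<alpha>)"
    by (auto elim!: Theta_arrE simp: Theta_comp_lift S_arr_lift comp_hom)
qed

text \<open>\<open>G_obj X\<close> is \<open>\<langle>{1}, X\<rangle>\<close> of the paper, indices being shifted to start at \<open>0\<close>.\<close>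
definition G_obj :: "'o \<Rightarrow> nat \<Rightarrow> 'o list" where
  "G_obj X = (\<lambda>i. if i = 0 then [X] else [])"

definition G_arr :: "'m \<Rightarrow> ('o, 'm) theta_arr" where
  "G_arr f = lift (G_obj (c_dom C f)) (G_obj (c_cod C f)) (act_m C (row \<phi> 0) (row \<phi> 0) f)"

definition eps :: "'o \<Rightarrow> 'm" where
  "eps X = act_m C id (row \<phi> 0) (c_id C X)"

definition eps_inv :: "'o \<Rightarrow> 'm" where
  "eps_inv X = act_m C (row \<phi> 0) id (c_id C X)"

definition eta :: "(nat \<Rightarrow> 'o list) \<Rightarrow> ('o, 'm) theta_arr" where
  "eta P = lift P (G_obj (S_obj \<phi> C P)) (eps_inv (S_obj \<phi> C P))"

lemma inj_row_\<phi>: "inj (row \<phi> 0)"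
  unfolding row_def by (rule injI) (simp add: inj_eq[OF inj_\<phi>])

lemma G_obj_in_theta_obj: "X \<in> c_obj C \<Longrightarrow> G_obj X \<in> theta_obj C"
  by (simp add: theta_obj_def G_obj_def)

lemma S_obj_G_obj: "X \<in> c_obj C \<Longrightarrow> S_obj \<phi> C (G_obj X) = act_o C (row \<phi> 0) X"
proof -
  have nonempty: "{i. G_obj X i \<noteq> []} = {0}"
    by (auto simp: G_obj_def)
  have "tens (G_obj X) = [X]" and "row (theta_inj \<phi> (G_obj X)) 0 = row \<phi> 0"
    unfolding tens_def theta_inj_def row_def nonempty by (simp_all add: G_obj_def)
  then show "X \<in> c_obj C \<Longrightarrow> ?thesis"
    by (simp add: S_obj_def push_Cons push_Nil plus_o_zero act_o_obj inj_row_\<phi>)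
qed

lemma G_arr_eq_lift:
  assumes "f \<in> hom C X Y"
  shows "G_arr f = lift (G_obj X) (G_obj Y) (act_m C (row \<phi> 0) (row \<phi> 0) f)"
    and "act_m C (row \<phi> 0) (row \<phi> 0) f \<in> hom C (S_obj \<phi> C (G_obj X)) (S_obj \<phi> C (G_obj Y))"
  using assms hom_objs[OF assms] act_m_hom[OF inj_row_\<phi> inj_row_\<phi> assms]
  by (simp_all add: G_arr_def hom_def S_obj_G_obj)

lemma G_arr_in_hom: "f \<in> hom C X Y \<Longrightarrow> G_arr f \<in> hom (Theta C) (G_obj X) (G_obj Y)"
  using hom_objs[of f X Y] G_arr_eq_lift[of f X Y] by (simp add: lift_in_hom G_obj_in_theta_obj)

lemma is_functor_G: "is_functor C (Theta C) G_obj G_arr"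
proof (rule is_functorI[OF is_cat is_cat_Theta])
  show "\<forall>X\<in>c_obj C. G_obj X \<in> c_obj (Theta C)"
    by (simp add: Theta_simps G_obj_in_theta_obj)
  show "\<forall>f\<in>c_arr C. G_arr f \<in> hom (Theta C) (G_obj (c_dom C f)) (G_obj (c_cod C f))"
    using G_arr_in_hom by (simp add: hom_def)
  show "\<forall>X\<in>c_obj C. G_arr (c_id C X) = c_id (Theta C) (G_obj X)"
  proof
    fix X assume X: "X \<in> c_obj C"
    show "G_arr (c_id C X) = c_id (Theta C) (G_obj X)"
      using G_arr_eq_lift(1)[OF id_hom[OF X]]
      by (simp add: Theta_id_eq_lift G_obj_in_theta_obj S_obj_G_obj act_m_id inj_row_\<phi> X)
  qed
  show "\<forall>f\<in>c_arr C. \<forall>g\<in>c_arr C. c_cod C f = c_dom C g \<longrightarrow>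
      G_arr (c_comp C g f) = c_comp (Theta C) (G_arr g) (G_arr f)"
  proof (intro ballI impI)
    fix f g assume "f \<in> c_arr C" "g \<in> c_arr C" "c_cod C f = c_dom C g"
    then have f: "f \<in> hom C (c_dom C f) (c_cod C f)" and g: "g \<in> hom C (c_cod C f) (c_cod C g)"
      by (simp_all add: hom_def)
    show "G_arr (c_comp C g f) = c_comp (Theta C) (G_arr g) (G_arr f)"
      using hom_objs[OF f] hom_objs[OF g] G_arr_eq_lift[OF f] G_arr_eq_lift[OF g]
        G_arr_eq_lift(1)[OF comp_hom[OF f g]]
      by (simp add: Theta_comp_lift G_obj_in_theta_obj act_m_comp[OF inj_row_\<phi> inj_row_\<phi> inj_row_\<phi> f g])
  qed
qed

lemma S_arr_G_arr: "f \<in> hom C X Y \<Longrightarrow> S_arr \<phi> C (G_arr f) = act_m C (row \<phi> 0) (row \<phi> 0) f"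
  using G_arr_eq_lift[of f X Y] hom_objs[of f X Y] by (simp add: S_arr_lift G_obj_in_theta_obj)

lemma eps_hom: "X \<in> c_obj C \<Longrightarrow> eps X \<in> hom C (S_obj \<phi> C (G_obj X)) X"
  using act_m_id_hom[OF inj_row_\<phi> _, of id X] by (simp add: eps_def S_obj_G_obj act_o_ident)

lemma eps_inv_hom: "X \<in> c_obj C \<Longrightarrow> eps_inv X \<in> hom C X (S_obj \<phi> C (G_obj X))"
  using act_m_id_hom[OF _ inj_row_\<phi>, of id X] by (simp add: eps_inv_def S_obj_G_obj act_o_ident)

lemma eps_eps_inv: "X \<in> c_obj C \<Longrightarrow> c_comp C (eps X) (eps_inv X) = c_id C X"
  using act_m_id_iso[OF _ inj_row_\<phi>, of id X] by (simp add: eps_def eps_inv_def act_o_ident)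

lemma eps_inv_eps: "X \<in> c_obj C \<Longrightarrow> c_comp C (eps_inv X) (eps X) = c_id C (S_obj \<phi> C (G_obj X))"
  using act_m_id_iso[OF inj_row_\<phi>, of id X] by (simp add: eps_def eps_inv_def S_obj_G_obj)

lemma eps_natural:
  "f \<in> hom C X Y \<Longrightarrow> c_comp C f (eps X) = c_comp C (eps Y) (S_arr \<phi> C (G_arr f))"
  using act_m_comp_id_right[OF inj_row_\<phi> _ _, of id id f X Y] act_m_comp_id_left[OF inj_row_\<phi> inj_row_\<phi> _, of id f X Y]
  by (simp add: eps_def S_arr_G_arr act_m_ident hom_def)

lemma eps_inv_natural:
  "f \<in> hom C X Y \<Longrightarrow> c_comp C (S_arr \<phi> C (G_arr f)) (eps_inv X) = c_comp C (eps_inv Y) f"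
  using act_m_comp_id_right[OF _ inj_row_\<phi> inj_row_\<phi>, of id f X Y] act_m_comp_id_left[OF _ _ inj_row_\<phi>, of id id f X Y]
  by (simp add: eps_inv_def S_arr_G_arr act_m_ident hom_def)

lemma eta_iso:
  assumes P: "P \<in> theta_obj C"
  shows "eta P \<in> hom (Theta C) P (G_obj (S_obj \<phi> C P))" and "is_iso (Theta C) (eta P)"
proof -
  let ?X = "S_obj \<phi> C P"
  have X: "?X \<in> c_obj C" and GX: "G_obj ?X \<in> theta_obj C"
    using S_obj_obj[OF P] G_obj_in_theta_obj by blast+
  have fwd: "eta P \<in> hom (Theta C) P (G_obj ?X)"
    unfolding eta_def by (rule lift_in_hom[OF P GX eps_inv_hom[OF X]])
  moreover have bwd: "lift (G_obj ?X) P (eps ?X) \<in> hom (Theta C) (G_obj ?X) P"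
    by (rule lift_in_hom[OF GX P eps_hom[OF X]])
  moreover have "c_comp (Theta C) (lift (G_obj ?X) P (eps ?X)) (eta P) = c_id (Theta C) P"
    using Theta_comp_lift[OF P GX P eps_inv_hom[OF X] eps_hom[OF X]]
    by (simp add: eta_def eps_eps_inv X Theta_id_eq_lift P)
  moreover have "c_comp (Theta C) (eta P) (lift (G_obj ?X) P (eps ?X)) = c_id (Theta C) (G_obj ?X)"
    using Theta_comp_lift[OF GX P GX eps_hom[OF X] eps_inv_hom[OF X]]
    by (simp add: eta_def eps_inv_eps X Theta_id_eq_lift GX)
  ultimately show "eta P \<in> hom (Theta C) P (G_obj ?X)" "is_iso (Theta C) (eta P)"
    by (blast intro: is_isoI)+
qed

lemma eta_natural:
  assumes "\<alpha> \<in> c_arr (Theta C)"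
  shows "c_comp (Theta C) (G_arr (S_arr \<phi> C \<alpha>)) (eta (c_dom (Theta C) \<alpha>)) =
    c_comp (Theta C) (eta (c_cod (Theta C) \<alpha>)) \<alpha>"
proof -
  obtain P Q f where \<alpha>: "\<alpha> = lift P Q f" and P: "P \<in> theta_obj C" and Q: "Q \<in> theta_obj C"
    and f: "f \<in> hom C (S_obj \<phi> C P) (S_obj \<phi> C Q)"
    using assms by (rule Theta_arrE)
  have X: "S_obj \<phi> C P \<in> c_obj C" and Y: "S_obj \<phi> C Q \<in> c_obj C"
    using S_obj_obj P Q by blast+
  show ?thesis
    unfolding \<alpha> eta_def S_arr_lift[OF P Q f] G_arr_eq_lift(1)[OF f]
    using Theta_comp_lift[OF P _ _ eps_inv_hom[OF X] G_arr_eq_lift(2)[OF f]]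
      Theta_comp_lift[OF P Q _ f eps_inv_hom[OF Y]] eps_inv_natural[OF f]
    by (simp add: G_obj_in_theta_obj X Y S_arr_G_arr[OF f])
qed

lemma eta_nat_iso:
  "nat_iso (Theta C) (Theta C) (\<lambda>P. P) (\<lambda>\<alpha>. \<alpha>) (G_obj \<circ> S_obj \<phi> C) (G_arr \<circ> S_arr \<phi> C) eta"
  by (rule nat_isoI) (simp_all add: Theta_simps(1) eta_iso eta_natural)

lemma eps_nat_iso: "nat_iso C C (S_obj \<phi> C \<circ> G_obj) (S_arr \<phi> C \<circ> G_arr) (\<lambda>X. X) (\<lambda>f. f) eps"
proof (rule nat_isoI)
  show "\<forall>X\<in>c_obj C. eps X \<in> hom C ((S_obj \<phi> C \<circ> G_obj) X) X \<and> is_iso C (eps X)"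
    using is_isoI[OF eps_hom eps_inv_hom eps_inv_eps eps_eps_inv] eps_hom by simp
  show "\<forall>f\<in>c_arr C. c_comp C f (eps (c_dom C f)) = c_comp C (eps (c_cod C f)) ((S_arr \<phi> C \<circ> G_arr) f)"
    using eps_natural by (simp add: hom_def)
qed

theorem cat_equivalence_S: "cat_equivalence (Theta C) C (S_obj \<phi> C) (S_arr \<phi> C)"
  unfolding cat_equivalence_def using is_functor_S is_functor_G eta_nat_iso eps_nat_iso by blast

end

section \<open>Naturality\<close>

lemma tens_Theta_obj_map: "tens (Theta_obj_map Fo P) = map Fo (tens P)"
  by (simp add: tens_def Theta_obj_map_def map_concat o_def)

lemma theta_inj_Theta_obj_map: "theta_inj \<phi> (Theta_obj_map Fo P) = theta_inj \<phi> P"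
  by (simp add: theta_inj_def Theta_obj_map_def)

lemma parsum_hom_zero: "parsum_hom C D Fo Fm \<Longrightarrow> Fo (zero C) = zero D"
  unfolding parsum_hom_def by simp

lemma parsum_hom_act_o:
  "parsum_hom C D Fo Fm \<Longrightarrow> inj u \<Longrightarrow> X \<in> c_obj C \<Longrightarrow> Fo (act_o C u X) = act_o D u (Fo X)"
  unfolding parsum_hom_def by simp

lemma parsum_hom_plus_o:
  "parsum_hom C D Fo Fm \<Longrightarrow> X \<in> c_obj C \<Longrightarrow> Y \<in> c_obj C \<Longrightarrow> disj C X Y \<Longrightarrow>
   Fo (plus_o C X Y) = plus_o D (Fo X) (Fo Y)"
  unfolding parsum_hom_def by simp

lemma (in parsummable_category) parsum_hom_push:
  "parsum_hom C D Fo Fm \<Longrightarrow> xs \<in> lists (c_obj C) \<Longrightarrow> inj_rep (length xs) \<psi> \<Longrightarrow>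
   Fo (push C \<psi> xs) = push D \<psi> (map Fo xs)"
proof (induct xs arbitrary: \<psi>)
  case Nil
  then show ?case by (simp add: push_Nil parsum_hom_zero)
next
  case (Cons x xs)
  then have x: "x \<in> c_obj C" and xs: "xs \<in> lists (c_obj C)" and \<psi>: "inj_rep (Suc (length xs)) \<psi>"
    by simp_all
  show ?case
    using Cons.hyps[OF Cons.prems(1) xs inj_rep_shift[OF \<psi>]] inj_row[OF \<psi>]
    by (simp add: push_Cons parsum_hom_plus_o[OF Cons.prems(1) act_o_obj push_obj disj_push_Cons[OF x xs \<psi>]]
        parsum_hom_act_o[OF Cons.prems(1)] x xs inj_rep_shift[OF \<psi>])
qed

context Theta_realization
begin

lemma S_arr_Theta_arr_map:
  assumes "\<alpha> \<in> c_arr (Theta C)"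
  shows "S_arr \<phi> D (Theta_arr_map Fo Fm \<alpha>) = Fm (S_arr \<phi> C \<alpha>)"
proof -
  obtain P Q f where \<alpha>: "\<alpha> = lift P Q f" and P: "P \<in> theta_obj C" and Q: "Q \<in> theta_obj C"
    and f: "f \<in> hom C (S_obj \<phi> C P) (S_obj \<phi> C Q)"
    using assms by (rule Theta_arrE)
  let ?c = "sig_cls C (tens P) (tens Q) (theta_inj \<phi> Q, f, theta_inj \<phi> P)"
  have "(theta_inj \<phi> Q, f', theta_inj \<phi> P) \<in> ?c \<longleftrightarrow> f' = f" for f'
    using reindex_same[OF tens_in_lists[OF P] tens_in_lists[OF Q]] is_sig_rep_theta_inj_iff[OF P Q] f
      inj_rep_theta_inj[OF inj_\<phi> P] inj_rep_theta_inj[OF inj_\<phi> Q]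
    by (simp add: mem_sig_cls_iff)
  then have "(THE g. (theta_inj \<phi> Q, g, theta_inj \<phi> P) \<in> (\<lambda>(\<psi>, f, \<phi>). (\<psi>, Fm f, \<phi>)) ` ?c) = Fm f"
    by (intro the_equality) (force, auto)
  then show ?thesis
    unfolding \<alpha> S_arr_lift[OF P Q f]
    by (simp add: lift_def Theta_arr_map_def S_arr_def theta_inj_Theta_obj_map)
qed

lemma S_obj_Theta_obj_map:
  assumes "parsum_hom C D Fo Fm" "P \<in> theta_obj C"
  shows "S_obj \<phi> D (Theta_obj_map Fo P) = Fo (S_obj \<phi> C P)"
  unfolding S_obj_def tens_Theta_obj_map theta_inj_Theta_obj_map
  by (rule parsum_hom_push[OF assms(1) tens_in_lists[OF assms(2)] inj_rep_theta_inj[OF inj_\<phi> assms(2)], symmetric])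

end

theorem lemma3p23:
  fixes \<phi> :: "nat \<times> nat \<Rightarrow> nat"
    and C :: "('o, 'm) parsum"
  assumes "inj \<phi>"
    and "parsummable C"
  shows "cat_equivalence (Theta C) C (S_obj \<phi> C) (S_arr \<phi> C) \<and>
    (\<forall>(D :: ('p, 'n) parsum) Fo Fm. parsummable D \<and> parsum_hom C D Fo Fm \<longrightarrow>
       (\<forall>P\<in>c_obj (Theta C). S_obj \<phi> D (Theta_obj_map Fo P) = Fo (S_obj \<phi> C P)) \<and>
       (\<forall>\<alpha>\<in>c_arr (Theta C). S_arr \<phi> D (Theta_arr_map Fo Fm \<alpha>) = Fm (S_arr \<phi> C \<alpha>)))"
proof -
  interpret Theta_realization C \<phi>
    using assms by unfold_locales
  show ?thesis
    by (auto simp: Theta_simps(1) cat_equivalence_S S_obj_Theta_obj_map S_arr_Theta_arr_map)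
qed

end
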